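(* Consider a crash-only execution of Algorithm 1 with choose_leader given by Algorithm 2 (Carousel). Let $R$ be a round after GST such that no party crashes in any round from $R$ to $R+f+2$ (inclusive). Then there exists a round $r$ with $R\le r\le R+f+2$ for which there are $2f+1$ LBR-synchronized($\ell$) invocations with a leader $\ell$ that is alive at round $r$.
   Context: System model: $n$ parties $\Pi=\{p_1,\dots,p_n\}$, at most $f<n/3$ faulty. A party is crashed if it halts prematurely; Byzantine if it deviates from the protocol; honest if neither. Non-Byzantine parties follow the protocol until they (possibly) crash. An execution is crash-only if no party is Byzantine. Communication is eventually synchronous: there is an unknown global stabilization time (GST) after which every message arrives within a known bound $\delta$. Blocks: a block contains transactions, a link to a parent block (implied chain back to genesis), a round number, an author id, and a certificate from which a set of $2f+1$ endorsing parties can be obtained. certified$(B,r)$ is a local predicate saying $B$ has a valid certificate ($2f+1$ endorsements) for round $r$. $B\longrightarrow B'$ means $B$ is on $B'$'s implied chain. LBR abstraction: each party can invoke $LBR(r,\ell)$; non-Byzantine parties endorse a block with round $r$ and author $\ell$ only by calling $LBR(r,\ell)$. Every invocation returns within $\Delta_l>c\delta$ time ($c$ an implementation constant) a block with round number $r'\le r$. Round $r$ has $k$ LBR-synchronized($\ell$) invocations if $k$ honest parties invoke $LBR(r,\ell)$ after GST and their execution intervals share a common intersection of length at least $c\delta$. Guarantees: (Endorsement) if certified$(B,r)$ then $B$'s endorser set has $2f+1$ parties; (Agreement) any two certified blocks returned to honest parties by LBR satisfy $B\longrightarrow B'$ or $B'\longrightarrow B$; (Progress) if round $r$ has $k\ge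 2f+1$ LBR-synchronized($\ell$) invocations and $\ell$ is honest, they all return a certified block with round number $r$ authored by $\ell$; (Blocking) if a non-Byzantine $\ell$ never invokes $LBR(r,\ell)$, no $LBR(r,\ell)$ invocation returns a certified block formed in round $r$; (Reputation) if a non-Byzantine $p$ never invokes LBR for round $r$, no certified block with round number $r$ has $p$ among its endorsers. Pacemaker: produces new_round$(r)$ notifications at honest parties for every $r$; if all new_round$(r)$ notifications at non-Byzantine parties occur after GST, the first at $T_f$ and last at $T_l$, then $T_l-T_f\le\delta$ and no non-Byzantine party receives new_round$(r+1)$ before $T_l+\Delta_p$, where $\Delta_p=\Delta_l$. Algorithm 1 (party $p_i$): initially commit_head $:=$ genesis. Upon new_round$(r)$: leader $:=$ choose_leader$(r,$ commit_head$)$; $B:=LBR(r,\text{leader})$; if commit_head $\longrightarrow B$, commit $B$ (and all not-yet-committed blocks on its implied chain) and set commit_head $:=B$. Algorithm 2 (Carousel), choose_leader$(r,h)$: if the round number of $h$ is not $r-1$, return party $(r \bmod n)$. Otherwise let active be the endorser set of $h$; walking from $h$ along parent links, add block authors to last_authors while $|\text{last\_authors}|<f$ and the current block is not genesis; return a deterministically chosen element of active $\setminus$ last_authors. Terminology: a party crashes in round $r$ if $r+1$ is the smallest round number for which it does not invoke LBR in Algorithm 1; a party is alive at all rounds before the round in which it crashes. A round $r$ occurs after GST if all new_round$(r)$ notifications at honest parties occur after GST. *)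

theory Defs
  imports Main "HOL.Real"
begin

text \<open>Parties are the natural numbers below n.  A block universe of type 'b is
given by a genesis block, a parent link, a round number, an author id,
an endorser set (obtained from the certificate), and a validity flag for the
certificate.\<close>

record 'b blocks =
  genesis   :: 'b
  parent    :: "'b \<Rightarrow> 'b"
  rnd       :: "'b \<Rightarrow> nat"
  author    :: "'b \<Rightarrow> nat"
  endorsers :: "'b \<Rightarrow> nat set"
  certd     :: "'b \<Rightarrow> bool"

text \<open>B --> B': B lies on the implied chain of B' (reflexively).\<close>
definition chain :: "'b blocks \<Rightarrow> 'b \<Rightarrow> 'b \<Rightarrow> bool" where
  "chain Bs B B' \<longleftrightarrow> (\<exists>k. (parent Bs ^^ k) B' = B)"

definition certified :: "'b blocks \<Rightarrow> 'b \<Rightarrow> nat \<Rightarrow> bool" where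
  "certified Bs B r \<longleftrightarrow> certd Bs B \<and> rnd Bs B = r"

definition block_tree :: "'b blocks \<Rightarrow> nat \<Rightarrow> bool" where
  "block_tree Bs n \<longleftrightarrow> rnd Bs (genesis Bs) = 0 \<and> (\<forall>B. chain Bs (genesis Bs) B)
     \<and> (\<forall>B. certd Bs B \<longrightarrow> author Bs B < n \<and> endorsers Bs B \<subseteq> {..<n})"

fun walk :: "'b blocks \<Rightarrow> nat \<Rightarrow> nat \<Rightarrow> 'b \<Rightarrow> nat set \<Rightarrow> nat set" where
  "walk Bs f 0 b S = S"
| "walk Bs f (Suc k) b S =
     (if card S < f \<and> b \<noteq> genesis Bs
      then walk Bs f k (parent Bs b) (insert (author Bs b) S) else S)"

definition dist_genesis :: "'b blocks \<Rightarrow> 'b \<Rightarrow> nat" where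
  "dist_genesis Bs h = (LEAST k. (parent Bs ^^ k) h = genesis Bs)"

definition last_authors :: "'b blocks \<Rightarrow> nat \<Rightarrow> 'b \<Rightarrow> nat set" where
  "last_authors Bs f h = walk Bs f (dist_genesis Bs h) h {}"

text \<open>choose_leader(r,h); pick is the deterministic choice function.\<close>
definition carousel :: "nat \<Rightarrow> nat \<Rightarrow> (nat set \<Rightarrow> nat) \<Rightarrow> 'b blocks \<Rightarrow> nat \<Rightarrow> 'b \<Rightarrow> nat" where
  "carousel n f pick Bs r h =
     (if rnd Bs h \<noteq> r - 1 then r mod n
      else pick (endorsers Bs h - last_authors Bs f h))"

text \<open>An execution: invokes p r = party p invokes LBR in round r (in Algorithm 1);
leader p r = the leader argument of that invocation; result p r = the returned block;
nr_time p r = time of the new_round(r) notification at p (= invocation time);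
ret_time p r = time the invocation returns.  Rounds are numbered from 1.\<close>
record 'b lbr_exec =
  invokes  :: "nat \<Rightarrow> nat \<Rightarrow> bool"
  leader   :: "nat \<Rightarrow> nat \<Rightarrow> nat"
  result   :: "nat \<Rightarrow> nat \<Rightarrow> 'b"
  nr_time  :: "nat \<Rightarrow> nat \<Rightarrow> real"
  ret_time :: "nat \<Rightarrow> nat \<Rightarrow> real"

record timing =
  GST     :: real
  delta   :: real
  Delta_l :: real
  cconst  :: real

text \<open>commit_head of p at the beginning of its round-r handler.\<close>
primrec chead :: "'b blocks \<Rightarrow> 'b lbr_exec \<Rightarrow> nat \<Rightarrow> nat \<Rightarrow> 'b" where
  "chead Bs E p 0 = genesis Bs"
| "chead Bs E p (Suc r) =
     (if r = 0 then genesis Bs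
      else if chain Bs (chead Bs E p r) (result E p r) then result E p r
      else chead Bs E p r)"

definition honest :: "'b lbr_exec \<Rightarrow> nat \<Rightarrow> bool" where
  "honest E p \<longleftrightarrow> (\<forall>r\<ge>1. invokes E p r)"

definition crashes_in :: "'b lbr_exec \<Rightarrow> nat \<Rightarrow> nat \<Rightarrow> bool" where
  "crashes_in E p r \<longleftrightarrow> (\<forall>r'. 1 \<le> r' \<and> r' \<le> r \<longrightarrow> invokes E p r') \<and> \<not> invokes E p (Suc r)"

definition alive :: "'b lbr_exec \<Rightarrow> nat \<Rightarrow> nat \<Rightarrow> bool" where
  "alive E p r \<longleftrightarrow> (\<forall>r'. 1 \<le> r' \<and> r' \<le> Suc r \<longrightarrow> invokes E p r')"

definition crash_only :: "nat \<Rightarrow> nat \<Rightarrow> 'b lbr_exec \<Rightarrow> bool" where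
  "crash_only n f E \<longleftrightarrow>
     (\<forall>p r r'. 1 \<le> r' \<longrightarrow> r' \<le> r \<longrightarrow> invokes E p r \<longrightarrow> invokes E p r')
     \<and> card {p. p < n \<and> \<not> honest E p} \<le> f"

definition algorithm1 :: "nat \<Rightarrow> nat \<Rightarrow> (nat set \<Rightarrow> nat) \<Rightarrow> 'b blocks \<Rightarrow> 'b lbr_exec \<Rightarrow> bool" where
  "algorithm1 n f pick Bs E \<longleftrightarrow>
     (\<forall>p<n. \<forall>r\<ge>1. invokes E p r \<longrightarrow>
        leader E p r = carousel n f pick Bs r (chead Bs E p r))"

definition round_after_GST :: "nat \<Rightarrow> timing \<Rightarrow> 'b lbr_exec \<Rightarrow> nat \<Rightarrow> bool" where
  "round_after_GST n T E r \<longleftrightarrow> (\<forall>p<n. invokes E p r \<longrightarrow> GST T < nr_time E p r)"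

definition lbr_sync :: "nat \<Rightarrow> timing \<Rightarrow> 'b lbr_exec \<Rightarrow> (nat \<Rightarrow> bool) \<Rightarrow> nat \<Rightarrow> nat \<Rightarrow> nat set \<Rightarrow> bool" where
  "lbr_sync n T E Q r l S \<longleftrightarrow>
     S \<subseteq> {p. p < n \<and> Q p}
     \<and> (\<forall>p\<in>S. invokes E p r \<and> leader E p r = l \<and> GST T < nr_time E p r)
     \<and> (\<exists>a. \<forall>p\<in>S. nr_time E p r \<le> a \<and> a + cconst T * delta T \<le> nr_time E p (Suc r))"

definition lbr_spec :: "nat \<Rightarrow> nat \<Rightarrow> 'b blocks \<Rightarrow> timing \<Rightarrow> 'b lbr_exec \<Rightarrow> bool" where
  "lbr_spec n f Bs T E \<longleftrightarrow>
     \<comment> \<open>returns within Delta_l a (certified, or genesis) block with round number at most r\<close>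
     (\<forall>p<n. \<forall>r\<ge>1. invokes E p r \<longrightarrow>
        nr_time E p r \<le> ret_time E p r \<and> ret_time E p r \<le> nr_time E p r + Delta_l T
        \<and> rnd Bs (result E p r) \<le> r
        \<and> (certified Bs (result E p r) (rnd Bs (result E p r)) \<or> result E p r = genesis Bs))
     \<comment> \<open>endorsing a block of round r and author l only by calling LBR(r,l)\<close>
   \<and> (\<forall>B r p. r \<ge> 1 \<longrightarrow> certified Bs B r \<longrightarrow> p \<in> endorsers Bs B \<longrightarrow>
        invokes E p r \<and> leader E p r = author Bs B)
     \<comment> \<open>Endorsement\<close>
   \<and> (\<forall>B r. certified Bs B r \<longrightarrow> endorsers Bs B \<subseteq> {..<n} \<and> card (endorsers Bs B) = 2*f+1)
     \<comment> \<open>Agreement\<close>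
   \<and> (\<forall>p q r r'. p < n \<longrightarrow> q < n \<longrightarrow> honest E p \<longrightarrow> honest E q \<longrightarrow> r \<ge> 1 \<longrightarrow> r' \<ge> 1 \<longrightarrow>
        certd Bs (result E p r) \<longrightarrow> certd Bs (result E q r') \<longrightarrow>
        chain Bs (result E p r) (result E q r') \<or> chain Bs (result E q r') (result E p r))
     \<comment> \<open>Progress\<close>
   \<and> (\<forall>r l S. r \<ge> 1 \<longrightarrow> l < n \<longrightarrow> honest E l \<longrightarrow> 2*f+1 \<le> card S \<longrightarrow>
        lbr_sync n T E (honest E) r l S \<longrightarrow>
        (\<forall>p\<in>S. certified Bs (result E p r) r \<and> author Bs (result E p r) = l))
     \<comment> \<open>Blocking\<close>
   \<and> (\<forall>l<n. \<forall>r\<ge>1. \<not> (invokes E l r \<and> leader E l r = l) \<longrightarrow>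
        (\<forall>p<n. invokes E p r \<and> leader E p r = l \<longrightarrow> \<not> certified Bs (result E p r) r))
     \<comment> \<open>Reputation\<close>
   \<and> (\<forall>p<n. \<forall>r\<ge>1. \<not> invokes E p r \<longrightarrow> (\<forall>B. certified Bs B r \<longrightarrow> p \<notin> endorsers Bs B))"

text \<open>Pacemaker, with Delta_p = Delta_l.\<close>
definition pacemaker :: "nat \<Rightarrow> timing \<Rightarrow> 'b lbr_exec \<Rightarrow> bool" where
  "pacemaker n T E \<longleftrightarrow>
     (\<forall>r\<ge>1. round_after_GST n T E r \<longrightarrow>
        (\<forall>p<n. \<forall>q<n. invokes E p r \<longrightarrow> invokes E q r \<longrightarrow> nr_time E p r - nr_time E q r \<le> delta T)
      \<and> (\<forall>p<n. \<forall>q<n. invokes E p (Suc r) \<longrightarrow> invokes E q r \<longrightarrow>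
           nr_time E q r + Delta_l T \<le> nr_time E p (Suc r)))"

end

theory Submission
  imports Defs
begin

text \<open>Let \<open>active\<close> be the parties that invoke LBR in round R. Nobody crashes in the
window, so they stay alive throughout it, and every other party is faulty; hence there are at
least 2f+1 of them. A round in which all active parties follow one active leader yields 2f+1
LBR-synchronized invocations by the pacemaker bounds. Carousel picks either the round-robin
leader r mod n or an endorser of a certified round r-1 block, who is then active. Hence, absent
such an agreeing round: a round whose round-robin leader is active gives no active party a
certified block (its author would be followed by a whole active endorser quorum); a round
without certified blocks makes the next round round-robin for all active parties; and a
round-robin round whose leader is inactive yields no certified block by Blocking. Among the f+2
rounds R+1, ..., R+f+2 at most f have an inactive round-robin leader, so there are two rounds
s1 < s2 with active round-robin leaders; the chain of uncertified round-robin rounds started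
after s1 reaches s2, where all active parties agree on the active leader s2 mod n.\<close>

lemma card_walk_le:
  assumes "finite S" "card S \<le> f"
  shows "finite (walk Bs f k b S) \<and> card (walk Bs f k b S) \<le> f"
  using assms
proof (induction k arbitrary: b S)
  case (Suc k)
  then show ?case by (auto simp: card_insert_if)
qed simp

lemma card_last_authors_le: "finite (last_authors Bs f h) \<and> card (last_authors Bs f h) \<le> f"
  unfolding last_authors_def by (simp add: card_walk_le)

lemma carousel_in_endorsers:
  assumes "\<forall>S. S \<noteq> {} \<longrightarrow> pick S \<in> S" and "f < card (endorsers Bs h)" and "rnd Bs h = r - 1"
  shows "carousel n f pick Bs r h \<in> endorsers Bs h"
proof -
  let ?L = "last_authors Bs f h"
  have "finite ?L" "card ?L \<le> f" using card_last_authors_le[of Bs f h] by simp_all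
  then have "\<not> endorsers Bs h \<subseteq> ?L"
    using card_mono assms(2) by (meson le_less_trans not_le)
  then have "endorsers Bs h - ?L \<noteq> {}" by blast
  then have "pick (endorsers Bs h - ?L) \<in> endorsers Bs h - ?L"
    by (rule assms(1)[rule_format])
  then show ?thesis
    using assms(3) unfolding carousel_def by simp
qed

lemma chead_in_results: "chead Bs E p r \<in> insert (genesis Bs) (result E p ` {1..<r})"
proof (induction r)
  case 0
  show ?case by simp
next
  case (Suc r)
  have "result E p ` {1..<r} \<subseteq> result E p ` {1..<Suc r}" by auto
  moreover have "r \<noteq> 0 \<Longrightarrow> result E p r \<in> result E p ` {1..<Suc r}" by simp
  ultimately show ?case using Suc.IH by (simp only: chead.simps split: if_splits) blast
qed

lemma inj_on_mod_interval:
  fixes a k n :: nat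
  assumes "k \<le> n"
  shows "inj_on (\<lambda>s. s mod n) {a..<a + k}"
proof (rule inj_onI, rule ccontr)
  fix x y
  assume x: "x \<in> {a..<a + k}" and y: "y \<in> {a..<a + k}" and "x mod n = y mod n" and "x \<noteq> y"
  then have "n dvd max x y - min x y"
    using mod_eq_dvd_iff_nat[of "min x y" "max x y" n] by (auto simp: min_def max_def)
  moreover have "0 < max x y - min x y" "max x y - min x y < n"
    using x y \<open>x \<noteq> y\<close> assms by auto
  ultimately show False
    using nat_dvd_not_less by blast
qed

lemma card_interval_mod_in_le:
  fixes a k n :: nat and N :: "nat set"
  assumes "k \<le> n" and "finite N"
  shows "card {s \<in> {a..<a + k}. s mod n \<in> N} \<le> card N"
proof -
  let ?S = "{s \<in> {a..<a + k}. s mod n \<in> N}"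
  have "inj_on (\<lambda>s. s mod n) ?S"
    using inj_on_mod_interval[OF assms(1)] by (rule inj_on_subset) auto
  then have "card ?S = card ((\<lambda>s. s mod n) ` ?S)"
    by (rule card_image[symmetric])
  also have "\<dots> \<le> card N"
    using assms(2) by (intro card_mono) auto
  finally show ?thesis .
qed

locale carousel_execution =
  fixes n f :: nat and pick :: "nat set \<Rightarrow> nat" and Bs :: "'b blocks" and E :: "'b lbr_exec"
    and T :: timing and R :: nat
  assumes resilience: "3 * f < n"
    and delta_pos: "0 < delta T" and cconst_pos: "0 < cconst T"
    and window_lt_Delta: "cconst T * delta T < Delta_l T"
    and block_tree: "block_tree Bs n"
    and pick_in: "\<forall>S. S \<noteq> {} \<longrightarrow> pick S \<in> S"
    and crash_only: "crash_only n f E"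
    and algorithm1: "algorithm1 n f pick Bs E"
    and lbr: "lbr_spec n f Bs T E"
    and pacemaker: "pacemaker n T E"
    and R_pos: "1 \<le> R" and R_after_GST: "round_after_GST n T E R"
    and no_crash: "\<forall>p<n. \<forall>r. R \<le> r \<and> r \<le> R + f + 2 \<longrightarrow> \<not> crashes_in E p r"
begin

lemma invokes_earlier: "1 \<le> r' \<Longrightarrow> r' \<le> r \<Longrightarrow> invokes E p r \<Longrightarrow> invokes E p r'"
  using crash_only unfolding crash_only_def by blast

lemma card_faulty_le: "card {p. p < n \<and> \<not> honest E p} \<le> f"
  using crash_only unfolding crash_only_def by blast

lemma rnd_genesis: "rnd Bs (genesis Bs) = 0"
  using block_tree unfolding block_tree_def by blast

lemma result_certified_or_genesis:
  "p < n \<Longrightarrow> 1 \<le> r \<Longrightarrow> invokes E p r \<Longrightarrow> rnd Bs (result E p r) \<le> r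
     \<and> (certified Bs (result E p r) (rnd Bs (result E p r)) \<or> result E p r = genesis Bs)"
  using lbr[unfolded lbr_spec_def, THEN conjunct1] by simp

lemma endorser_invoked:
  "1 \<le> r \<Longrightarrow> certified Bs B r \<Longrightarrow> p \<in> endorsers Bs B \<Longrightarrow> invokes E p r \<and> leader E p r = author Bs B"
  using lbr[unfolded lbr_spec_def, THEN conjunct2, THEN conjunct1] by simp

lemma endorsers_quorum:
  "certified Bs B r \<Longrightarrow> endorsers Bs B \<subseteq> {..<n} \<and> card (endorsers Bs B) = 2 * f + 1"
  using lbr[unfolded lbr_spec_def, THEN conjunct2, THEN conjunct2, THEN conjunct1] by blast

lemma blocking:
  "l < n \<Longrightarrow> 1 \<le> r \<Longrightarrow> \<not> invokes E l r \<Longrightarrow> p < n \<Longrightarrow> invokes E p r \<Longrightarrow> leader E p r = l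
     \<Longrightarrow> \<not> certified Bs (result E p r) r"
  using lbr[unfolded lbr_spec_def] by simp

lemma next_round_after_Delta:
  "1 \<le> r \<Longrightarrow> round_after_GST n T E r \<Longrightarrow> p < n \<Longrightarrow> q < n \<Longrightarrow> invokes E p (Suc r) \<Longrightarrow> invokes E q r
     \<Longrightarrow> nr_time E q r + Delta_l T \<le> nr_time E p (Suc r)"
  using pacemaker unfolding pacemaker_def by simp

lemma leader_carousel:
  "p < n \<Longrightarrow> 1 \<le> r \<Longrightarrow> invokes E p r \<Longrightarrow> leader E p r = carousel n f pick Bs r (chead Bs E p r)"
  using algorithm1 unfolding algorithm1_def by simp

definition active :: "nat set" where
  "active = {p. p < n \<and> invokes E p R}"

lemma active_lt: "p \<in> active \<Longrightarrow> p < n"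
  unfolding active_def by simp

lemma invokes_active: "p < n \<Longrightarrow> R \<le> r \<Longrightarrow> invokes E p r \<Longrightarrow> p \<in> active"
  unfolding active_def using invokes_earlier R_pos by blast

lemma active_invokes:
  assumes "p \<in> active" and "1 \<le> r" and "r \<le> R + f + 3"
  shows "invokes E p r"
proof (cases "r \<le> R")
  case True
  then show ?thesis
    using assms invokes_earlier unfolding active_def by blast
next
  case False
  have "invokes E p s" if "R \<le> s" "s \<le> R + f + 3" for s
    using that
  proof (induction s rule: dec_induct)
    case base
    then show ?case using assms(1) unfolding active_def by simp
  next
    case (step s)
    then have "\<not> crashes_in E p s" using no_crash active_lt[OF assms(1)] by simp
    moreover have "invokes E p s'" if "1 \<le> s'" "s' \<le> s" for s'
      using step invokes_earlier that by simp
    ultimately show ?case unfolding crashes_in_def by blast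
  qed
  then show ?thesis using False assms(3) by simp
qed

lemma active_alive:
  assumes "p \<in> active" and "r \<le> R + f + 2"
  shows "alive E p r"
  unfolding alive_def using active_invokes[OF assms(1)] assms(2) by simp

lemma card_inactive_le: "card ({..<n} - active) \<le> f"
proof -
  have "{..<n} - active \<subseteq> {p. p < n \<and> \<not> honest E p}"
  proof
    fix p assume "p \<in> {..<n} - active"
    then have "p < n" and "\<not> invokes E p R" unfolding active_def by auto
    then show "p \<in> {p. p < n \<and> \<not> honest E p}" unfolding honest_def using R_pos by auto
  qed
  then have "card ({..<n} - active) \<le> card {p. p < n \<and> \<not> honest E p}"
    by (rule card_mono[rotated]) simp
  then show ?thesis using card_faulty_le by linarith
qed

lemma card_active_ge: "2 * f + 1 \<le> card active"
proof -
  have "active \<subseteq> {..<n}" unfolding active_def by auto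
  then have "card ({..<n} - active) = n - card active" and "card active \<le> n"
    using card_Diff_subset[of active "{..<n}"] card_mono[of "{..<n}" active] by (auto intro: finite_subset)
  then show ?thesis using card_inactive_le resilience by linarith
qed

lemma Delta_l_pos: "0 < Delta_l T"
  using mult_pos_pos[OF cconst_pos delta_pos] window_lt_Delta by linarith

lemma round_after_GST_later:
  assumes "R \<le> r"
  shows "round_after_GST n T E r"
  using assms
proof (induction r rule: dec_induct)
  case base
  show ?case using R_after_GST .
next
  case (step r)
  have "1 \<le> r" using step R_pos by simp
  show ?case unfolding round_after_GST_def
  proof (intro allI impI)
    fix p assume "p < n" and "invokes E p (Suc r)"
    have "invokes E p r" using invokes_earlier[OF \<open>1 \<le> r\<close> _ \<open>invokes E p (Suc r)\<close>] by simp
    then have "GST T < nr_time E p r"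
      using step.IH \<open>p < n\<close> unfolding round_after_GST_def by blast
    moreover have "nr_time E p r + Delta_l T \<le> nr_time E p (Suc r)"
      using next_round_after_Delta[OF \<open>1 \<le> r\<close> step.IH \<open>p < n\<close> \<open>p < n\<close>]
        \<open>invokes E p (Suc r)\<close> \<open>invokes E p r\<close> .
    ultimately show "GST T < nr_time E p (Suc r)" using Delta_l_pos by simp
  qed
qed

definition quorum_agrees :: "nat \<Rightarrow> bool" where
  "quorum_agrees r \<longleftrightarrow> (\<exists>l\<in>active. \<exists>S\<subseteq>active. card S = 2 * f + 1 \<and> (\<forall>p\<in>S. leader E p r = l))"

definition round_robin :: "nat \<Rightarrow> bool" where
  "round_robin r \<longleftrightarrow> (\<forall>p\<in>active. leader E p r = r mod n)"

definition uncertified :: "nat \<Rightarrow> bool" where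
  "uncertified r \<longleftrightarrow> (\<forall>p\<in>active. \<not> certified Bs (result E p r) r)"

lemma quorum_agrees_synchronized:
  assumes "R \<le> r" and "r \<le> R + f + 2" and "quorum_agrees r"
  shows "\<exists>l S. l < n \<and> alive E l r \<and> card S = 2 * f + 1 \<and> lbr_sync n T E (\<lambda>p. alive E p r) r l S"
proof -
  obtain l S where l: "l \<in> active" and S: "S \<subseteq> active" "card S = 2 * f + 1"
    and follow: "\<forall>p\<in>S. leader E p r = l"
    using assms(3) unfolding quorum_agrees_def by blast
  have "1 \<le> r" using assms(1) R_pos by simp
  have invoked: "invokes E p r" "invokes E p (Suc r)" if "p \<in> S" for p
    using that S active_invokes \<open>1 \<le> r\<close> assms(2) by auto
  have "finite S" "S \<noteq> {}" using S by (auto simp: card_ge_0_finite)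
  define a where "a = Max ((\<lambda>p. nr_time E p r) ` S)"
  have "a \<in> (\<lambda>p. nr_time E p r) ` S"
    unfolding a_def using \<open>finite S\<close> \<open>S \<noteq> {}\<close> by (intro Max_in) auto
  then obtain q where "q \<in> S" and a_q: "a = nr_time E q r" by blast
  have window: "nr_time E p r \<le> a \<and> a + cconst T * delta T \<le> nr_time E p (Suc r)" if "p \<in> S" for p
  proof
    show "nr_time E p r \<le> a" unfolding a_def using \<open>finite S\<close> that by simp
    have "p < n" "q < n" using S \<open>q \<in> S\<close> that active_lt by auto
    then have "a + Delta_l T \<le> nr_time E p (Suc r)"
      using next_round_after_Delta[OF \<open>1 \<le> r\<close> round_after_GST_later[OF assms(1)]]
        invoked \<open>q \<in> S\<close> that a_q by blast
    then show "a + cconst T * delta T \<le> nr_time E p (Suc r)"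
      using window_lt_Delta by simp
  qed
  have "GST T < nr_time E p r" if "p \<in> S" for p
    using round_after_GST_later[OF assms(1)] invoked that S active_lt unfolding round_after_GST_def by blast
  then have "lbr_sync n T E (\<lambda>p. alive E p r) r l S"
    unfolding lbr_sync_def using S active_lt active_alive assms(2) invoked follow window by blast
  moreover have "l < n" "alive E l r" using l active_lt active_alive assms(2) by auto
  ultimately show ?thesis using S by blast
qed

lemma quorum_agrees_if_round_robin:
  assumes "round_robin r" and "r mod n \<in> active"
  shows "quorum_agrees r"
proof -
  obtain S where "S \<subseteq> active" "card S = 2 * f + 1"
    using obtain_subset_with_card_n[OF card_active_ge] by blast
  then show ?thesis using assms unfolding quorum_agrees_def round_robin_def by blast
qed

lemma quorum_agrees_if_certified:
  assumes "R \<le> r" and B: "certified Bs B r" and "author Bs B \<in> active"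
  shows "quorum_agrees r"
proof -
  have "1 \<le> r" using assms(1) R_pos by simp
  have "endorsers Bs B \<subseteq> active"
    using invokes_active assms(1) endorser_invoked[OF \<open>1 \<le> r\<close> B] endorsers_quorum[OF B] by blast
  moreover have "\<forall>p\<in>endorsers Bs B. leader E p r = author Bs B"
    using endorser_invoked[OF \<open>1 \<le> r\<close> B] by blast
  ultimately show ?thesis
    unfolding quorum_agrees_def using endorsers_quorum[OF B] assms(3) by blast
qed

lemma chead_certified_or_genesis:
  assumes "p \<in> active" and "1 \<le> r" and "r \<le> R + f + 3"
  shows "rnd Bs (chead Bs E p r) < r
    \<and> (chead Bs E p r = genesis Bs \<or> certified Bs (chead Bs E p r) (rnd Bs (chead Bs E p r)))"
proof -
  from chead_in_results[of Bs E p r] show ?thesis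
  proof
    assume "chead Bs E p r = genesis Bs"
    then show ?thesis using rnd_genesis assms(2) by simp
  next
    assume "chead Bs E p r \<in> result E p ` {1..<r}"
    then obtain r' where "1 \<le> r'" "r' < r" and "chead Bs E p r = result E p r'" by auto
    moreover have "invokes E p r'" using active_invokes assms \<open>1 \<le> r'\<close> \<open>r' < r\<close> by simp
    ultimately show ?thesis using result_certified_or_genesis[OF active_lt[OF assms(1)]] by fastforce
  qed
qed

lemma leader_active_or_round_robin:
  assumes "p \<in> active" and "R < t" and "t \<le> R + f + 2"
  shows "leader E p t \<in> active \<or> leader E p t = t mod n"
proof (cases "rnd Bs (chead Bs E p t) = t - 1")
  case False
  then show ?thesis
    using leader_carousel[OF active_lt] active_invokes assms by (simp add: carousel_def)
next
  case True
  define h where "h = chead Bs E p t"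
  have "1 \<le> t" and "t \<le> R + f + 3" and "1 \<le> t - 1" using assms(2,3) R_pos by simp_all
  then have "h \<noteq> genesis Bs" using True rnd_genesis unfolding h_def by auto
  then have h: "certified Bs h (t - 1)"
    using chead_certified_or_genesis[OF assms(1) \<open>1 \<le> t\<close> \<open>t \<le> R + f + 3\<close>] True
    unfolding h_def by simp
  have "leader E p t = carousel n f pick Bs t h"
    using leader_carousel[OF active_lt] active_invokes assms unfolding h_def by simp
  also have "\<dots> \<in> endorsers Bs h"
    using carousel_in_endorsers[OF pick_in _ True[folded h_def]] endorsers_quorum[OF h] by simp
  finally have "leader E p t \<in> endorsers Bs h" .
  moreover have "R \<le> t - 1" using assms(2) by simp
  ultimately have "leader E p t \<in> active"
    using invokes_active endorser_invoked[OF \<open>1 \<le> t - 1\<close> h] endorsers_quorum[OF h] by blast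
  then show ?thesis ..
qed

lemma round_robin_after_uncertified:
  assumes "R \<le> t" and "t \<le> R + f + 1" and "uncertified t"
  shows "round_robin (Suc t)"
  unfolding round_robin_def
proof
  fix p assume p: "p \<in> active"
  have "1 \<le> t" and "p < n" using assms(1) R_pos active_lt[OF p] by simp_all
  have "rnd Bs (chead Bs E p (Suc t)) \<noteq> t"
  proof (cases "chain Bs (chead Bs E p t) (result E p t)")
    case True
    then have "chead Bs E p (Suc t) = result E p t" using \<open>1 \<le> t\<close> by simp
    moreover have "invokes E p t" using active_invokes p \<open>1 \<le> t\<close> assms(2) by simp
    moreover have "\<not> certified Bs (result E p t) t" using assms(3) p unfolding uncertified_def by blast
    ultimately show ?thesis
      using result_certified_or_genesis[OF \<open>p < n\<close> \<open>1 \<le> t\<close>] rnd_genesis \<open>1 \<le> t\<close> by force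
  next
    case False
    then have "chead Bs E p (Suc t) = chead Bs E p t" using \<open>1 \<le> t\<close> by simp
    then show ?thesis
      using chead_certified_or_genesis[OF p \<open>1 \<le> t\<close>] assms(2) by simp
  qed
  then show "leader E p (Suc t) = Suc t mod n"
    using leader_carousel[OF \<open>p < n\<close>] active_invokes[OF p] assms(2) by (simp add: carousel_def)
qed

lemma uncertified_if_round_robin_leader_active:
  assumes "R < t" and "t \<le> R + f + 2" and "\<not> quorum_agrees t" and "t mod n \<in> active"
  shows "uncertified t"
  unfolding uncertified_def
proof (intro ballI notI)
  fix q assume "q \<in> active" and B: "certified Bs (result E q t) t"
  have "1 \<le> t" using assms(1) by simp
  obtain e where e: "e \<in> endorsers Bs (result E q t)"
    using endorsers_quorum[OF B] by fastforce
  then have "e < n" and "invokes E e t" and e_leader: "leader E e t = author Bs (result E q t)"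
    using endorsers_quorum[OF B] endorser_invoked[OF \<open>1 \<le> t\<close> B] by auto
  then have "e \<in> active" using invokes_active[of e t] assms(1) by simp
  then have "author Bs (result E q t) \<in> active"
    using leader_active_or_round_robin[OF _ assms(1,2)] assms(4) e_leader by metis
  then show False
    using quorum_agrees_if_certified[OF less_imp_le[OF assms(1)] B] assms(3) by simp
qed

lemma uncertified_if_round_robin:
  assumes "R \<le> t" and "t \<le> R + f + 2" and "\<not> quorum_agrees t" and "round_robin t"
  shows "uncertified t"
  unfolding uncertified_def
proof
  fix q assume q: "q \<in> active"
  have "1 \<le> t" and "q < n" using assms(1) R_pos active_lt[OF q] by simp_all
  have "t mod n < n" using resilience by simp
  moreover have "t mod n \<notin> active" using quorum_agrees_if_round_robin assms(3,4) by blast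
  then have "\<not> invokes E (t mod n) t" using invokes_active[OF \<open>t mod n < n\<close> assms(1)] by blast
  moreover have "invokes E q t" using active_invokes[OF q \<open>1 \<le> t\<close>] assms(2) by simp
  moreover have "leader E q t = t mod n" using assms(4) q unfolding round_robin_def by blast
  ultimately show "\<not> certified Bs (result E q t) t"
    using blocking \<open>1 \<le> t\<close> \<open>q < n\<close> by blast
qed

lemma two_rounds_with_active_round_robin_leader:
  obtains s1 s2 where "R < s1" "s1 < s2" "s2 \<le> R + f + 2" "s1 mod n \<in> active" "s2 mod n \<in> active"
proof -
  define I where "I = {R + 1..<R + 1 + (f + 2)}"
  define inactive_leader where "inactive_leader = {s \<in> I. s mod n \<in> {..<n} - active}"
  have "card inactive_leader \<le> f"
  proof (cases "f = 0")
    \<comment> \<open>then n may be 1, so the rounds need not have distinct residues\<close>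
    case True
    then have "{..<n} - active = {}" using card_inactive_le by simp
    then have "inactive_leader = {}" unfolding inactive_leader_def by blast
    then show ?thesis by simp
  next
    case False
    then have "f + 2 \<le> n" using resilience by simp
    then show ?thesis
      using card_interval_mod_in_le[of "f + 2" n "{..<n} - active" "R + 1"] card_inactive_le
      unfolding inactive_leader_def I_def by simp
  qed
  moreover have "{s \<in> I. s mod n \<in> active} = I - inactive_leader"
    using resilience unfolding inactive_leader_def by auto
  moreover have "card (I - inactive_leader) = card I - card inactive_leader"
    by (rule card_Diff_subset) (auto simp: inactive_leader_def I_def)
  ultimately have "2 \<le> card {s \<in> I. s mod n \<in> active}"
    unfolding I_def by simp
  then obtain x y where "x \<in> I" "y \<in> I" "x mod n \<in> active" "y mod n \<in> active" "x \<noteq> y"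
    using card_le_Suc0_iff_eq[of "{s \<in> I. s mod n \<in> active}"] unfolding I_def by fastforce
  then show ?thesis
    using that[of x y] that[of y x] unfolding I_def by (cases "x < y") auto
qed

lemma quorum_agrees_in_window: "\<exists>r. R \<le> r \<and> r \<le> R + f + 2 \<and> quorum_agrees r"
proof (rule ccontr)
  assume "\<not> ?thesis"
  then have disagree: "\<not> quorum_agrees r" if "R \<le> r" "r \<le> R + f + 2" for r
    using that by blast
  obtain s1 s2 where s: "R < s1" "s1 < s2" "s2 \<le> R + f + 2" and "s1 mod n \<in> active" "s2 mod n \<in> active"
    by (rule two_rounds_with_active_round_robin_leader)
  have "uncertified s1"
    using uncertified_if_round_robin_leader_active disagree s \<open>s1 mod n \<in> active\<close> by simp
  have "round_robin t" if "Suc s1 \<le> t" "t \<le> s2" for t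
    using that
  proof (induction t rule: dec_induct)
    case base
    show ?case using round_robin_after_uncertified \<open>uncertified s1\<close> s by simp
  next
    case (step t)
    then have "uncertified t" using uncertified_if_round_robin disagree s by simp
    then show ?case using round_robin_after_uncertified step s by simp
  qed
  then have "quorum_agrees s2"
    using quorum_agrees_if_round_robin \<open>s2 mod n \<in> active\<close> s by simp
  then show False using disagree s by simp
qed

end

theorem lemma4:
  fixes Bs :: "'b blocks" and E :: "'b lbr_exec" and T :: timing
    and pick :: "nat set \<Rightarrow> nat" and n f R :: nat
  assumes "3 * f < n"
    and "0 < delta T" and "0 < cconst T" and "cconst T * delta T < Delta_l T"
    and "block_tree Bs n"
    and "\<forall>S. S \<noteq> {} \<longrightarrow> pick S \<in> S"
    and "crash_only n f E"
    and "algorithm1 n f pick Bs E"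
    and "lbr_spec n f Bs T E"
    and "pacemaker n T E"
    and "1 \<le> R" and "round_after_GST n T E R"
    and "\<forall>p<n. \<forall>r. R \<le> r \<and> r \<le> R + f + 2 \<longrightarrow> \<not> crashes_in E p r"
  shows "\<exists>r l S. R \<le> r \<and> r \<le> R + f + 2 \<and> l < n \<and> alive E l r
            \<and> card S = 2 * f + 1 \<and> lbr_sync n T E (\<lambda>p. alive E p r) r l S"
proof -
  interpret carousel_execution n f pick Bs E T R
    using assms by (rule carousel_execution.intro)
  obtain r where "R \<le> r" "r \<le> R + f + 2" "quorum_agrees r"
    using quorum_agrees_in_window by blast
  then show ?thesis
    using quorum_agrees_synchronized by blast
qed

end
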